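(* Let $n\ge 2$, $r>0$, $I_n=\{\bm{x}\in\mathbb{R}^n: |x_i|\le r,\ i=1,\dots,n\}$, and $f\in C^1(I_n)$. Then any $h$ satisfying $h=f$ on $D_n$, $\nabla h=\nabla f$ on $D_n$, and $h\in\mathcal{H}_-(I_n,f)$ is a best one-sided $L^1$-approximant from below to $f$ with respect to $\mathcal{H}(I_n)$, i.e. $\|f-h\|_1\le\|f-\tilde h\|_1$ for every $\tilde h\in\mathcal{H}_-(I_n,f)$.
   Context: $\mathcal{H}(I_n)$ is the space of functions harmonic ($C^2$ with vanishing Laplacian) in some domain containing $I_n$; $\mathcal{H}_-(I_n,f)=\{h\in\mathcal{H}(I_n): h\le f \text{ on } I_n\}$; $\|g\|_1=\int_{I_n}|g|\,d\lambda_n$ with $\lambda_n$ Lebesgue measure. For $1\le i<j\le n$, $D^{ij}_n=\{\bm{x}\in I_n : |x_k|\le |x_i|=|x_j| \text{ for all } k\ne i,j\}$, and $D_n=\bigcup_{1\le i<j\le n}D^{ij}_n$. *)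

theory Defs
  imports "HOL-Analysis.Analysis"
begin

definition cube :: "real \<Rightarrow> (real^'n) set" where
  "cube r = {x. \<forall>i. \<bar>x $ i\<bar> \<le> r}"

definition diagset :: "real \<Rightarrow> (real^'n) set" where
  "diagset r = {x \<in> cube r. \<exists>i j. i \<noteq> j \<and> \<bar>x $ i\<bar> = \<bar>x $ j\<bar> \<and>
                  (\<forall>k. k \<noteq> i \<and> k \<noteq> j \<longrightarrow> \<bar>x $ k\<bar> \<le> \<bar>x $ i\<bar>)}"

text \<open>h is C^2 with vanishing Laplacian on the open set U. Dh is the gradient,
  Hs the Hessian (row i = gradient of the i-th partial derivative).\<close>
definition harmonic_on :: "(real^'n) set \<Rightarrow> (real^'n \<Rightarrow> real) \<Rightarrow> bool" where
  "harmonic_on U h \<longleftrightarrow> open U \<and>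
     (\<exists>Dh Hs. (\<forall>x\<in>U. (h has_derivative (\<lambda>v. Dh x \<bullet> v)) (at x)) \<and>
              (\<forall>x\<in>U. (Dh has_derivative (\<lambda>v. Hs x *v v)) (at x)) \<and>
              continuous_on U Hs \<and>
              (\<forall>x\<in>U. (\<Sum>i\<in>UNIV. Hs x $ i $ i) = 0))"

definition harm :: "(real^'n) set \<Rightarrow> (real^'n \<Rightarrow> real) set" where
  "harm S = {h. \<exists>U. S \<subseteq> U \<and> harmonic_on U h}"

definition harm_below :: "(real^'n) set \<Rightarrow> (real^'n \<Rightarrow> real) \<Rightarrow> (real^'n \<Rightarrow> real) set" where
  "harm_below S f = {h \<in> harm S. \<forall>x\<in>S. h x \<le> f x}"

definition L1norm :: "(real^'n) set \<Rightarrow> (real^'n \<Rightarrow> real) \<Rightarrow> real" where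
  "L1norm S g = integral S (\<lambda>x. \<bar>g x\<bar>)"

end

theory Submission
  imports Defs
begin

text \<open>
  For a competitor \<open>h'\<close>, the difference \<open>u = h - h'\<close> is harmonic near the cube and, since
  \<open>h = f \<ge> h'\<close> on \<open>D\<^sub>n\<close>, nonnegative on \<open>D\<^sub>n\<close>; it suffices to show \<open>\<integral> u \<ge> 0\<close>.
  On a line parallel to the \<open>i\<close>-th axis let \<open>m\<close> be the largest \<open>|x\<^sub>k|\<close> with \<open>k \<noteq> i\<close>.
  Integrating by parts twice against the weight \<open>w = (r - \<parallel>x\<parallel>\<^sub>\<infinity>)\<^sup>2/2\<close> gives
  \<open>\<integral> w \<partial>\<^sub>i\<^sup>2u = \<integral>\<^bsub>|x\<^sub>i| \<ge> m\<^esub> u - (r - m)(u(x\<^sub>i = m) + u(x\<^sub>i = -m))\<close> along the line,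
  and the two points \<open>x\<^sub>i = \<plusminus>m\<close> lie in \<open>D\<^sub>n\<close>. Averaging over all such lines (Fubini) and
  summing over \<open>i\<close>, the left-hand sides add up to \<open>\<integral> w \<Delta>u = 0\<close>, while the regions where
  \<open>x\<^sub>i\<close> is a coordinate of maximal modulus tile the cube up to a null set, so that
  \<open>0 \<le> \<integral> u\<close>.
\<close>

definition coord_upd :: "real^'n \<Rightarrow> 'n::finite \<Rightarrow> real \<Rightarrow> real^'n" where
  "coord_upd x i s = x + (s - x $ i) *\<^sub>R axis i 1"

definition infnorm_off :: "'n::finite \<Rightarrow> real^'n \<Rightarrow> real" where
  "infnorm_off i x = infnorm (coord_upd x i 0)"

lemma coord_upd_nth [simp]: "coord_upd x i s $ k = (if k = i then s else x $ k)"
  by (simp add: coord_upd_def axis_def)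

lemma coord_upd_coord_upd [simp]: "coord_upd (coord_upd x i s) i t = coord_upd x i t"
  by (simp add: vec_eq_iff)

lemma continuous_on_coord_upd [continuous_intros]:
  "continuous_on S f \<Longrightarrow> continuous_on S g \<Longrightarrow> continuous_on S (\<lambda>p. coord_upd (f p) i (g p))"
  unfolding coord_upd_def by (intro continuous_intros)

lemma has_derivative_coord_upd: "((\<lambda>s. coord_upd x i s) has_derivative (\<lambda>t. t *\<^sub>R axis i 1)) (at s)"
  unfolding coord_upd_def by (auto intro!: derivative_eq_intros simp: algebra_simps)

lemma cube_cbox: "cube r = cbox (- (\<chi> k. r)) (\<chi> k. r)"
proof -
  have "\<bar>y\<bar> \<le> r \<longleftrightarrow> -r \<le> y \<and> y \<le> r" for y :: real by auto
  then show ?thesis unfolding cube_def set_eq_iff mem_box_cart by simp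
qed

lemma coord_upd_in_cube: "x \<in> cube r \<Longrightarrow> \<bar>s\<bar> \<le> r \<Longrightarrow> coord_upd x i s \<in> cube r"
  by (auto simp: cube_def)

lemma infnorm_cart_attained: "\<exists>j. infnorm (x::real^'n) = \<bar>x $ j\<bar>"
proof -
  have "infnorm x = Max (range (\<lambda>k. \<bar>x $ k\<bar>))"
  proof -
    have "{\<bar>x $ k\<bar> |k. k \<in> UNIV} = range (\<lambda>k. \<bar>x $ k\<bar>)" by auto
    then show ?thesis unfolding infnorm_cart by (simp add: cSup_eq_Max)
  qed
  also have "\<dots> \<in> range (\<lambda>k. \<bar>x $ k\<bar>)"
    by (intro Max_in) auto
  finally show ?thesis by auto
qed

lemma infnorm_le_iff_in_cube: "infnorm x \<le> r \<longleftrightarrow> x \<in> cube r"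
  using infnorm_cart_attained[of x] component_le_infnorm_cart[of x]
  by (auto simp: cube_def intro: order_trans)

lemma component_le_infnorm_off: "k \<noteq> i \<Longrightarrow> \<bar>x $ k\<bar> \<le> infnorm_off i x"
  using component_le_infnorm_cart[of "coord_upd x i 0" k] by (simp add: infnorm_off_def)

lemma infnorm_off_nonneg: "0 \<le> infnorm_off i x"
  by (simp add: infnorm_off_def infnorm_pos_le)

lemma infnorm_off_coord_upd [simp]: "infnorm_off i (coord_upd x i s) = infnorm_off i x"
  by (simp add: infnorm_off_def)

lemma infnorm_off_le: "x \<in> cube r \<Longrightarrow> infnorm_off i x \<le> r"
  unfolding infnorm_off_def infnorm_le_iff_in_cube
  by (rule coord_upd_in_cube) (auto simp: cube_def intro: order_trans[OF abs_ge_zero])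

lemma continuous_on_infnorm_off [continuous_intros]: "continuous_on S (infnorm_off i)"
  unfolding infnorm_off_def by (intro continuous_intros)

lemma ex_other_index:
  assumes "CARD('n::finite) \<ge> 2"
  shows "\<exists>k::'n. k \<noteq> i"
proof (rule ccontr)
  assume "\<nexists>k. k \<noteq> i"
  then have "(UNIV :: 'n set) = {i}" by auto
  then have "CARD('n) = card {i}" by (simp only:)
  with assms show False by simp
qed

lemma infnorm_off_attained:
  fixes i :: "'n::finite"
  assumes "CARD('n) \<ge> 2"
  obtains j where "j \<noteq> i" "infnorm_off i x = \<bar>x $ j\<bar>"
proof -
  obtain k where "k \<noteq> i"
    using ex_other_index[OF assms] by blast
  obtain j where j: "infnorm_off i x = \<bar>coord_upd x i 0 $ j\<bar>"
    using infnorm_cart_attained unfolding infnorm_off_def by blast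
  show ?thesis
  proof (cases "j = i")
    case True
    then have "infnorm_off i x = 0" using j by simp
    with component_le_infnorm_off[OF \<open>k \<noteq> i\<close>, of x] show ?thesis
      by (intro that[OF \<open>k \<noteq> i\<close>]) simp
  next
    case False
    with j show ?thesis by (intro that) auto
  qed
qed

lemma infnorm_coord_upd:
  fixes i :: "'n::finite"
  assumes "CARD('n) \<ge> 2"
  shows "infnorm (coord_upd x i s) = max \<bar>s\<bar> (infnorm_off i x)"
proof (rule antisym)
  obtain j where "infnorm (coord_upd x i s) = \<bar>coord_upd x i s $ j\<bar>"
    using infnorm_cart_attained by blast
  then show "infnorm (coord_upd x i s) \<le> max \<bar>s\<bar> (infnorm_off i x)"
    using component_le_infnorm_off[of j i x] by (cases "j = i") auto
  obtain k where "k \<noteq> i" "infnorm_off i x = \<bar>x $ k\<bar>"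
    using infnorm_off_attained[OF assms] .
  then show "max \<bar>s\<bar> (infnorm_off i x) \<le> infnorm (coord_upd x i s)"
    using component_le_infnorm_cart[of "coord_upd x i s" i]
      component_le_infnorm_cart[of "coord_upd x i s" k] by auto
qed

lemma coord_upd_in_diagset:
  fixes i :: "'n::finite"
  assumes "CARD('n) \<ge> 2" "x \<in> cube r" "\<bar>t\<bar> = infnorm_off i x"
  shows "coord_upd x i t \<in> diagset r"
proof -
  obtain j where j: "j \<noteq> i" "infnorm_off i x = \<bar>x $ j\<bar>"
    using infnorm_off_attained[OF assms(1)] .
  have "coord_upd x i t \<in> cube r"
    using assms infnorm_off_le[OF assms(2), of i] by (intro coord_upd_in_cube) auto
  moreover have "\<bar>coord_upd x i t $ k\<bar> \<le> \<bar>coord_upd x i t $ i\<bar>" if "k \<noteq> i" for k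
    using component_le_infnorm_off[OF that, of x] assms(3) that by simp
  ultimately show ?thesis
    unfolding diagset_def using j assms(3) by auto
qed

lemma has_integral_real_derivative:
  fixes F f :: "real \<Rightarrow> real"
  assumes "a \<le> b" "\<And>s. s \<in> {a..b} \<Longrightarrow> (F has_real_derivative f s) (at s)"
  shows "(f has_integral F b - F a) {a..b}"
  using assms
  by (intro fundamental_theorem_of_calculus)
    (auto simp: has_real_derivative_iff_has_vector_derivative intro: has_vector_derivative_at_within)

lemma has_integral_taylor_tail:
  fixes U DU D2U :: "real \<Rightarrow> real"
  assumes "a \<le> b"
    and DU: "\<And>s. s \<in> {a..b} \<Longrightarrow> (U has_real_derivative DU s) (at s)"
    and D2U: "\<And>s. s \<in> {a..b} \<Longrightarrow> (DU has_real_derivative D2U s) (at s)"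
  shows "((\<lambda>s. (b - s)^2/2 * D2U s - U s) has_integral - ((b - a)^2/2 * DU a + (b - a) * U a)) {a..b}"
proof -
  define F where "F s = (b - s)^2/2 * DU s + (b - s) * U s" for s
  have "(F has_real_derivative (b - s)^2/2 * D2U s - U s) (at s)" if "s \<in> {a..b}" for s
    unfolding F_def
    by (rule derivative_eq_intros DU[OF that] D2U[OF that] refl | simp)+
      (simp add: field_simps power2_eq_square)
  from has_integral_real_derivative[OF \<open>a \<le> b\<close> this] show ?thesis by (simp add: F_def)
qed

lemma has_integral_weighted_second_derivative:
  fixes U DU D2U :: "real \<Rightarrow> real"
  assumes "0 \<le> m" "m \<le> r"
    and DU: "\<And>s. s \<in> {-r..r} \<Longrightarrow> (U has_real_derivative DU s) (at s)"
    and D2U: "\<And>s. s \<in> {-r..r} \<Longrightarrow> (DU has_real_derivative D2U s) (at s)"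
  shows "((\<lambda>s. (r - max \<bar>s\<bar> m)^2/2 * D2U s - (if m \<le> \<bar>s\<bar> then U s else 0))
           has_integral - (r - m) * (U m + U (-m))) {-r..r}"
proof -
  let ?f = "\<lambda>s. (r - max \<bar>s\<bar> m)^2/2 * D2U s - (if m \<le> \<bar>s\<bar> then U s else 0)"
  have right_tail: "((\<lambda>s. (r - s)^2/2 * D2U s - U s) has_integral - ((r - m)^2/2 * DU m + (r - m) * U m)) {m..r}"
    using \<open>0 \<le> m\<close> by (intro has_integral_taylor_tail[OF \<open>m \<le> r\<close>] DU D2U) auto
  have right: "(?f has_integral - ((r - m)^2/2 * DU m + (r - m) * U m)) {m..r}"
    by (rule has_integral_spike_finite[where S="{}", OF _ _ right_tail]) (use \<open>0 \<le> m\<close> in auto)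
  have mirror: "((\<lambda>s. U (-s)) has_real_derivative - DU (-s)) (at s)"
    "((\<lambda>s. - DU (-s)) has_real_derivative D2U (-s)) (at s)" if "s \<in> {m..r}" for s
  proof -
    have "-s \<in> {-r..r}" using that \<open>0 \<le> m\<close> by auto
    then show "((\<lambda>s. U (-s)) has_real_derivative - DU (-s)) (at s)"
      using DU DERIV_mirror by blast
    have "((\<lambda>s. DU (-s)) has_real_derivative - D2U (-s)) (at s)"
      using D2U DERIV_mirror \<open>-s \<in> {-r..r}\<close> by blast
    from DERIV_minus[OF this] show "((\<lambda>s. - DU (-s)) has_real_derivative D2U (-s)) (at s)"
      by simp
  qed
  have "((\<lambda>s. (r - s)^2/2 * D2U (-s) - U (-s)) has_integral
          - ((r - m)^2/2 * - DU (-m) + (r - m) * U (-m))) {m..r}"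
    by (rule has_integral_taylor_tail[OF \<open>m \<le> r\<close> mirror])
  then have left_tail: "((\<lambda>s. (r + s)^2/2 * D2U s - U s) has_integral
          (r - m)^2/2 * DU (-m) - (r - m) * U (-m)) {-r..-m}"
    by (subst has_integral_reflect_real[symmetric]) simp
  have left: "(?f has_integral (r - m)^2/2 * DU (-m) - (r - m) * U (-m)) {-r..-m}"
    by (rule has_integral_spike_finite[where S="{}", OF _ _ left_tail]) (use \<open>0 \<le> m\<close> in auto)
  have middle_ftc: "((\<lambda>s. (r - m)^2/2 * D2U s) has_integral (r - m)^2/2 * DU m - (r - m)^2/2 * DU (-m)) {-m..m}"
    using \<open>0 \<le> m\<close> \<open>m \<le> r\<close>
    by (intro has_integral_real_derivative DERIV_cmult D2U) auto
  have middle: "(?f has_integral (r - m)^2/2 * DU m - (r - m)^2/2 * DU (-m)) {-m..m}"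
    by (rule has_integral_spike_finite[where S="{m, -m}", OF _ _ middle_ftc]) auto
  have "(?f has_integral ((r - m)^2/2 * DU (-m) - (r - m) * U (-m))
          + ((r - m)^2/2 * DU m - (r - m)^2/2 * DU (-m))) {-r..m}"
    using \<open>0 \<le> m\<close> \<open>m \<le> r\<close> by (intro has_integral_combine[OF _ _ left middle]) auto
  then have "(?f has_integral ((r - m)^2/2 * DU (-m) - (r - m) * U (-m))
          + ((r - m)^2/2 * DU m - (r - m)^2/2 * DU (-m))
          + - ((r - m)^2/2 * DU m + (r - m) * U m)) {-r..r}"
    using \<open>m \<le> r\<close> \<open>0 \<le> m\<close> by (intro has_integral_combine[OF _ _ _ right]) auto
  then show ?thesis by (simp add: algebra_simps)
qed

lemma content_cbox_cart_cases:
  "measure lborel (cbox a (b::real^'n)) = (if \<forall>k. a $ k \<le> b $ k then \<Prod>k\<in>UNIV. b $ k - a $ k else 0)"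
  by (simp add: content_cbox_if_cart interval_ne_empty_cart(1)[symmetric])

lemma content_cbox_coord_upd:
  fixes a b :: "real^'n"
  shows "measure lborel (cbox (coord_upd a i s) (coord_upd b i t)) * measure lborel (cbox (a $ i) (b $ i))
       = measure lborel (cbox a b) * measure lborel (cbox s t)"
proof -
  have split: "(\<forall>k. P k) \<longleftrightarrow> P i \<and> (\<forall>k. k \<noteq> i \<longrightarrow> P k)" for P :: "'n \<Rightarrow> bool" by auto
  have prod: "(\<Prod>k\<in>UNIV. f k) = f i * (\<Prod>k\<in>UNIV - {i}. f k)" for f :: "'n \<Rightarrow> real"
    by (rule prod.remove) auto
  have "(\<Prod>k\<in>UNIV - {i}. coord_upd b i t $ k - coord_upd a i s $ k) = (\<Prod>k\<in>UNIV - {i}. b $ k - a $ k)"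
    by (rule prod.cong) auto
  then show ?thesis
    unfolding content_cbox_cart_cases unfolding cbox_interval content_real_if
    by (subst (1 2) split[of "\<lambda>k. _ $ k \<le> _ $ k"], subst (1 2) prod) auto
qed

lemma mem_image_involution_iff: "(\<And>x. f (f x) = x) \<Longrightarrow> y \<in> f ` A \<longleftrightarrow> f y \<in> A"
  by (metis image_eqI imageE)

text \<open>
  A volume-preserving involution of \<open>\<real>\<^sup>n \<times> \<real>\<close> exchanging the line parameter with the
  \<open>i\<close>-th coordinate; through it Fubini turns averages over lines parallel to the \<open>i\<close>-th
  axis into plain integrals over the cube.
\<close>

definition coord_swap :: "'n::finite \<Rightarrow> (real^'n) \<times> real \<Rightarrow> (real^'n) \<times> real" where
  "coord_swap i p = (coord_upd (fst p) i (snd p), fst p $ i)"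

lemma coord_swap_coord_swap [simp]: "coord_swap i (coord_swap i p) = p"
  by (cases p) (simp add: coord_swap_def vec_eq_iff)

lemma continuous_coord_swap: "continuous (at p) (coord_swap i)"
  unfolding coord_swap_def coord_upd_def by (intro continuous_intros)

lemma coord_swap_cbox:
  fixes a b :: "real^'n::finite"
  shows "coord_swap i ` cbox (a, s) (b, t) = cbox (coord_upd a i s, a $ i) (coord_upd b i t, b $ i)"
proof -
  have split: "(\<forall>k. P k) \<longleftrightarrow> P i \<and> (\<forall>k. k \<noteq> i \<longrightarrow> P k)" for P :: "'n \<Rightarrow> bool" by auto
  have "coord_swap i p \<in> cbox (a, s) (b, t) \<longleftrightarrow> p \<in> cbox (coord_upd a i s, a $ i) (coord_upd b i t, b $ i)"
    for p
    by (cases p) (simp add: coord_swap_def mem_box_cart, subst (1 2) split, auto)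
  then show ?thesis
    by (simp add: set_eq_iff mem_image_involution_iff[where f="coord_swap i"])
qed

lemma content_coord_swap_cbox:
  fixes u v :: "(real^'n) \<times> real"
  shows "measure lborel (coord_swap i ` cbox u v) = measure lborel (cbox u v)"
  by (cases u, cases v) (simp only: coord_swap_cbox content_Pair content_cbox_coord_upd)

lemma coord_swap_image_cbox:
  fixes u v :: "(real^'n) \<times> real"
  shows "\<exists>w z. coord_swap i ` cbox u v = cbox w z"
  by (cases u, cases v) (auto simp: coord_swap_cbox)

lemma line_average_integral:
  fixes g :: "real^'n \<Rightarrow> real"
  assumes g: "continuous_on (cube r) g" and "0 \<le> r"
  shows "(\<lambda>x. integral {-r..r} (\<lambda>s. g (coord_upd x i s))) integrable_on cube r"
    and "integral (cube r) (\<lambda>x. integral {-r..r} (\<lambda>s. g (coord_upd x i s))) = 2 * r * integral (cube r) g"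
proof -
  define a :: "real^'n" where "a = - (\<chi> k. r)"
  define b :: "real^'n" where "b = (\<chi> k. r)"
  define K where "K = cbox (a, -r) (b, r)"
  have cube: "cube r = cbox a b" by (simp add: cube_cbox a_def b_def)
  have K: "K = cube r \<times> {-r..r}" by (simp add: K_def cbox_Pair_eq cube)
  define F where "F p = g (coord_upd (fst p) i (snd p))" for p
  define G where "G p = g (fst p)" for p :: "(real^'n) \<times> real"
  have "continuous_on K F"
    unfolding F_def
    by (rule continuous_on_compose2[OF g]) (intro continuous_intros, auto intro!: coord_upd_in_cube simp: K abs_le_iff)
  then have F_fubini: "integral K F = integral (cube r) (\<lambda>x. integral {-r..r} (\<lambda>s. g (coord_upd x i s)))"
    by (simp add: K_def integral_prod_continuous cube F_def)
  have "continuous_on (cube r) (\<lambda>x. integral (cbox (-r) r) (\<lambda>s. g (coord_upd x i s)))"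
    using \<open>continuous_on K F\<close> by (intro integral_continuous_on_param) (simp add: K F_def split_def)
  then show "(\<lambda>x. integral {-r..r} (\<lambda>s. g (coord_upd x i s))) integrable_on cube r"
    by (simp add: cube integrable_continuous)
  have "continuous_on K G"
    unfolding G_def by (rule continuous_on_compose2[OF g continuous_on_fst]) (auto simp: K)
  then have G_int: "(G has_integral integral K G) K"
    by (simp add: K_def integrable_continuous integrable_integral)
  have G_fubini: "integral K G = 2 * r * integral (cube r) g"
    using integral_prod_continuous[of a "-r" b r G] \<open>continuous_on K G\<close> \<open>0 \<le> r\<close>
    by (simp add: K_def G_def cube flip: K_def)
  have "coord_upd a i (-r) = a" "coord_upd b i r = b" "a $ i = -r" "b $ i = r"
    by (simp_all add: vec_eq_iff a_def b_def)
  then have swap_K: "coord_swap i ` K = K"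
    by (simp add: K_def coord_swap_cbox)
  have "((\<lambda>p. G (coord_swap i p)) has_integral (1 / 1) *\<^sub>R integral K G) (coord_swap i ` K)"
    unfolding K_def
    by (rule has_integral_twiddle[OF _ coord_swap_coord_swap coord_swap_coord_swap continuous_coord_swap
          coord_swap_image_cbox coord_swap_image_cbox])
      (use G_int in \<open>simp_all add: content_coord_swap_cbox K_def\<close>)
  moreover have "(\<lambda>p. G (coord_swap i p)) = F"
    by (simp add: fun_eq_iff G_def F_def coord_swap_def)
  ultimately have "integral K F = integral K G"
    using swap_K by (simp add: integral_unique)
  then show "integral (cube r) (\<lambda>x. integral {-r..r} (\<lambda>s. g (coord_upd x i s))) = 2 * r * integral (cube r) g"
    using F_fubini G_fubini by simp
qed

lemma line_average_integral_limit:
  fixes g :: "real^'n \<Rightarrow> real" and gk :: "nat \<Rightarrow> real^'n \<Rightarrow> real"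
  assumes cont: "\<And>k. continuous_on (cube r) (gk k)"
    and bound: "\<And>k x. x \<in> cube r \<Longrightarrow> \<bar>gk k x\<bar> \<le> B"
    and lim: "\<And>x. x \<in> cube r \<Longrightarrow> (\<lambda>k. gk k x) \<longlonglongrightarrow> g x"
    and "0 \<le> r"
  shows "g integrable_on cube r"
    and "(\<lambda>x. integral {-r..r} (\<lambda>s. g (coord_upd x i s))) integrable_on cube r"
    and "integral (cube r) (\<lambda>x. integral {-r..r} (\<lambda>s. g (coord_upd x i s))) = 2 * r * integral (cube r) g"
proof -
  define Ik where "Ik k x = integral {-r..r} (\<lambda>s. gk k (coord_upd x i s))" for k x
  define I where "I = (\<lambda>x. integral {-r..r} (\<lambda>s. g (coord_upd x i s)))"
  have const_int: "(\<lambda>x. c) integrable_on cube r" for c :: real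
    unfolding cube_cbox by (rule integrable_const)
  have "gk k integrable_on cube r" for k
    using cont by (simp add: cube_cbox integrable_continuous)
  from dominated_convergence[of gk "cube r" "\<lambda>x. B" g, OF this const_int] bound lim
  have "g integrable_on cube r" and outer: "(\<lambda>k. integral (cube r) (gk k)) \<longlonglongrightarrow> integral (cube r) g"
    by auto
  then show "g integrable_on cube r" by blast
  have inner: "(\<lambda>k. Ik k x) \<longlonglongrightarrow> I x" and inner_bound: "\<bar>Ik k x\<bar> \<le> 2 * r * B"
    if x: "x \<in> cube r" for x k
  proof -
    have line_in_cube: "coord_upd x i s \<in> cube r" if "s \<in> {-r..r}" for s
      using that x by (intro coord_upd_in_cube) auto
    have "continuous_on {-r..r} (\<lambda>s. gk k (coord_upd x i s))" for k
      by (rule continuous_on_compose2[OF cont]) (auto intro!: continuous_intros line_in_cube)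
    then have "(\<lambda>s. gk k (coord_upd x i s)) integrable_on {-r..r}" for k
      by (rule integrable_continuous_real)
    from dominated_convergence(2)[OF this integrable_const_ivl[of B "-r" r]]
    show "(\<lambda>k. Ik k x) \<longlonglongrightarrow> I x"
      using bound lim line_in_cube by (auto simp: Ik_def I_def)
    have "norm (Ik k x) \<le> B * (r - - r)"
      unfolding Ik_def using \<open>0 \<le> r\<close> bound line_in_cube
      by (intro integral_bound \<open>continuous_on {-r..r} (\<lambda>s. gk k (coord_upd x i s))\<close>) auto
    then show "\<bar>Ik k x\<bar> \<le> 2 * r * B" by (simp add: algebra_simps)
  qed
  have "Ik k integrable_on cube r" for k
    unfolding Ik_def by (rule line_average_integral(1)[OF cont \<open>0 \<le> r\<close>])
  from dominated_convergence[of Ik "cube r" "\<lambda>x. 2 * r * B" I, OF this const_int] inner inner_bound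
  have "I integrable_on cube r" and inner_lim: "(\<lambda>k. integral (cube r) (Ik k)) \<longlonglongrightarrow> integral (cube r) I"
    by auto
  then show "(\<lambda>x. integral {-r..r} (\<lambda>s. g (coord_upd x i s))) integrable_on cube r"
    by (simp add: I_def)
  have "integral (cube r) (Ik k) = 2 * r * integral (cube r) (gk k)" for k
    unfolding Ik_def by (rule line_average_integral(2)[OF cont \<open>0 \<le> r\<close>])
  with tendsto_mult_left[OF outer, of "2 * r"]
  have "(\<lambda>k. integral (cube r) (Ik k)) \<longlonglongrightarrow> 2 * r * integral (cube r) g"
    by simp
  with inner_lim show "integral (cube r) (\<lambda>x. integral {-r..r} (\<lambda>s. g (coord_upd x i s))) = 2 * r * integral (cube r) g"
    unfolding I_def by (rule LIMSEQ_unique)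
qed

text \<open>
  Continuous approximations of the indicator of \<open>[0, \<infinity>)\<close>: the line averaging identity,
  proved for continuous integrands, reaches the cut-off integrands below by dominated convergence.
\<close>

definition ramp :: "nat \<Rightarrow> real \<Rightarrow> real" where
  "ramp k t = min 1 (max 0 (1 + real (Suc k) * t))"

lemma ramp_bounds: "0 \<le> ramp k t" "ramp k t \<le> 1"
  by (auto simp: ramp_def)

lemma continuous_on_ramp [continuous_intros]:
  "continuous_on S f \<Longrightarrow> continuous_on S (\<lambda>x. ramp k (f x))"
  unfolding ramp_def by (intro continuous_intros)

lemma ramp_tendsto: "(\<lambda>k. ramp k t) \<longlonglongrightarrow> (if 0 \<le> t then 1 else 0)"
proof (cases "0 \<le> t")
  case True
  then show ?thesis by (simp add: ramp_def)
next
  case False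
  obtain N :: nat where N: "1 / (-t) < real N"
    using reals_Archimedean2 by blast
  have "ramp k t = 0" if "N \<le> k" for k
  proof -
    have "1 < real N * (-t)"
      using N False by (simp add: field_simps)
    also have "\<dots> \<le> real (Suc k) * (-t)"
      using that False by (intro mult_right_mono) auto
    finally show ?thesis by (simp add: ramp_def)
  qed
  then have "\<forall>\<^sub>F k in sequentially. ramp k t = 0"
    by (auto simp: eventually_sequentially)
  then show ?thesis
    using False by (simp add: tendsto_eventually)
qed

lemma line_average_integral_dominant:
  fixes u :: "real^'n \<Rightarrow> real"
  assumes u: "continuous_on (cube r) u" and "0 \<le> r"
  shows "(\<lambda>x. if infnorm_off i x \<le> \<bar>x $ i\<bar> then u x else 0) integrable_on cube r"
    and "(\<lambda>x. integral {-r..r} (\<lambda>s. if infnorm_off i x \<le> \<bar>s\<bar> then u (coord_upd x i s) else 0))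
           integrable_on cube r"
    and "integral (cube r) (\<lambda>x. integral {-r..r} (\<lambda>s. if infnorm_off i x \<le> \<bar>s\<bar> then u (coord_upd x i s) else 0))
           = 2 * r * integral (cube r) (\<lambda>x. if infnorm_off i x \<le> \<bar>x $ i\<bar> then u x else 0)"
proof -
  have "bounded (u ` cube r)"
    using compact_continuous_image[OF u] by (intro compact_imp_bounded) (simp add: cube_cbox)
  then obtain B where B: "\<And>x. x \<in> cube r \<Longrightarrow> \<bar>u x\<bar> \<le> B"
    unfolding bounded_real by blast
  let ?g = "\<lambda>x. if infnorm_off i x \<le> \<bar>x $ i\<bar> then u x else 0"
  define gk where "gk k x = ramp k (\<bar>x $ i\<bar> - infnorm_off i x) * u x" for k x
  have cont: "continuous_on (cube r) (gk k)" for k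
    unfolding gk_def by (intro continuous_intros u)
  have bound: "\<bar>gk k x\<bar> \<le> B" if "x \<in> cube r" for k x
    using B[OF that] ramp_bounds[of k "\<bar>x $ i\<bar> - infnorm_off i x"]
    by (simp add: gk_def abs_mult mult_le_one order_trans[OF mult_right_mono] split: if_splits)
  have lim: "(\<lambda>k. gk k x) \<longlonglongrightarrow> ?g x" if "x \<in> cube r" for x
    using tendsto_mult_right[OF ramp_tendsto, of "\<bar>x $ i\<bar> - infnorm_off i x" "u x"]
    by (simp add: gk_def split: if_splits)
  note limit = line_average_integral_limit[where gk=gk and g="?g", OF cont bound lim \<open>0 \<le> r\<close>]
  then show "?g integrable_on cube r"
    by blast
  show "(\<lambda>x. integral {-r..r} (\<lambda>s. if infnorm_off i x \<le> \<bar>s\<bar> then u (coord_upd x i s) else 0))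
           integrable_on cube r"
    and "integral (cube r) (\<lambda>x. integral {-r..r} (\<lambda>s. if infnorm_off i x \<le> \<bar>s\<bar> then u (coord_upd x i s) else 0))
           = 2 * r * integral (cube r) ?g"
    using limit(2,3)[where i=i] by simp_all
qed

lemma negligible_abs_coord_ties:
  "negligible {x::real^'n. \<exists>j k. j \<noteq> k \<and> \<bar>x $ j\<bar> = \<bar>x $ k\<bar>}"
proof -
  define H where "H p = {x::real^'n. (axis (fst p) 1 - axis (snd p) 1) \<bullet> x = 0}
    \<union> {x. (axis (fst p) 1 + axis (snd p) 1) \<bullet> x = (0::real)}" for p :: "'n \<times> 'n"
  have "axis j 1 - axis k 1 \<noteq> (0::real^'n)" "axis j 1 + axis k 1 \<noteq> (0::real^'n)" if "j \<noteq> k" for j k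
    using that by (auto simp: vec_eq_iff axis_def dest!: spec[of _ j])
  then have "negligible (\<Union> (H ` {p. fst p \<noteq> snd p}))"
    unfolding H_def by (intro negligible_Union finite_imageI) (auto intro!: negligible_Un negligible_hyperplane)
  moreover have "{x::real^'n. \<exists>j k. j \<noteq> k \<and> \<bar>x $ j\<bar> = \<bar>x $ k\<bar>} \<subseteq> \<Union> (H ` {p. fst p \<noteq> snd p})"
    by (force simp: H_def inner_diff_left inner_add_left inner_axis' abs_eq_iff)
  ultimately show ?thesis by (rule negligible_subset)
qed

lemma sum_dominant_coord:
  fixes x :: "real^'n"
  assumes "CARD('n) \<ge> 2" and no_ties: "\<And>j k. j \<noteq> k \<Longrightarrow> \<bar>x $ j\<bar> \<noteq> \<bar>x $ k\<bar>"
  shows "(\<Sum>i\<in>UNIV. if infnorm_off i x \<le> \<bar>x $ i\<bar> then c else 0) = c"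
proof -
  obtain i0 where i0: "infnorm x = \<bar>x $ i0\<bar>"
    using infnorm_cart_attained by blast
  have "infnorm_off i x \<le> \<bar>x $ i\<bar> \<longleftrightarrow> i = i0" for i
  proof
    assume "infnorm_off i x \<le> \<bar>x $ i\<bar>"
    moreover have "\<bar>x $ i\<bar> < \<bar>x $ i0\<bar>" if "i \<noteq> i0"
      using component_le_infnorm_cart[of x i] i0 no_ties[OF that] by simp
    ultimately show "i = i0"
      using component_le_infnorm_off[of i0 i x] by fastforce
  next
    assume "i = i0"
    obtain j where "j \<noteq> i" "infnorm_off i x = \<bar>x $ j\<bar>"
      using infnorm_off_attained[OF assms(1)] .
    then show "infnorm_off i x \<le> \<bar>x $ i\<bar>"
      using component_le_infnorm_cart[of x j] i0 \<open>i = i0\<close> by simp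
  qed
  then show ?thesis by simp
qed

lemma integral_sum_dominant_coord:
  fixes u :: "real^'n \<Rightarrow> real"
  assumes "CARD('n) \<ge> 2"
    and "\<And>i. (\<lambda>x. if infnorm_off i x \<le> \<bar>x $ i\<bar> then u x else 0) integrable_on S"
  shows "(\<Sum>i\<in>UNIV. integral S (\<lambda>x. if infnorm_off i x \<le> \<bar>x $ i\<bar> then u x else 0)) = integral S u"
proof -
  have "(\<Sum>i\<in>UNIV. integral S (\<lambda>x. if infnorm_off i x \<le> \<bar>x $ i\<bar> then u x else 0))
      = integral S (\<lambda>x. \<Sum>i\<in>UNIV. if infnorm_off i x \<le> \<bar>x $ i\<bar> then u x else 0)"
    using assms(2) by (simp add: integral_sum)
  also have "\<dots> = integral S u"
  proof (rule integral_spike[OF negligible_abs_coord_ties])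
    fix x assume "x \<in> S - {x. \<exists>j k. j \<noteq> k \<and> \<bar>x $ j\<bar> = \<bar>x $ k\<bar>}"
    then have "\<bar>x $ j\<bar> \<noteq> \<bar>x $ k\<bar>" if "j \<noteq> k" for j k
      using that by blast
    from sum_dominant_coord[OF assms(1) this, where c="u x"]
    show "u x = (\<Sum>i\<in>UNIV. if infnorm_off i x \<le> \<bar>x $ i\<bar> then u x else 0)"
      by (rule sym)
  qed
  finally show ?thesis .
qed

lemma has_real_derivative_coord_line:
  assumes "(u has_derivative (\<lambda>v. Du \<bullet> v)) (at (coord_upd x i s))"
  shows "((\<lambda>s. u (coord_upd x i s)) has_real_derivative Du $ i) (at s)"
proof -
  have "((\<lambda>s. u (coord_upd x i s)) has_derivative (\<lambda>t. Du \<bullet> (t *\<^sub>R axis i 1))) (at s)"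
    by (rule has_derivative_compose[OF has_derivative_coord_upd assms])
  then show ?thesis
    by (simp add: has_field_derivative_def inner_axis mult_commute_abs)
qed

lemma has_real_derivative_coord_line_nth:
  fixes D :: "real^'n \<Rightarrow> real^'n"
  assumes "(D has_derivative (\<lambda>v. H *v v)) (at (coord_upd x i s))"
  shows "((\<lambda>s. D (coord_upd x i s) $ i) has_real_derivative H $ i $ i) (at s)"
proof -
  have "((\<lambda>s. D (coord_upd x i s)) has_derivative (\<lambda>t. H *v (t *\<^sub>R axis i 1))) (at s)"
    by (rule has_derivative_compose[OF has_derivative_coord_upd assms])
  then have "((\<lambda>s. D (coord_upd x i s) $ i) has_derivative (\<lambda>t. (H *v (t *\<^sub>R axis i 1)) $ i)) (at s)"
    by (rule bounded_linear.has_derivative[OF bounded_linear_vec_nth])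
  then show ?thesis
    by (simp add: has_field_derivative_def matrix_vector_mult_scaleR matrix_vector_mult_basis
        column_def mult_commute_abs)
qed

lemma integral_line_dominant_eq:
  fixes u :: "real^'n \<Rightarrow> real" and Du :: "real^'n \<Rightarrow> real^'n" and Hu :: "real^'n \<Rightarrow> real^'n^'n" and i :: 'n
  assumes "CARD('n) \<ge> 2" and x: "x \<in> cube r"
    and Du: "\<And>y. y \<in> cube r \<Longrightarrow> (u has_derivative (\<lambda>v. Du y \<bullet> v)) (at y)"
    and Hu: "\<And>y. y \<in> cube r \<Longrightarrow> (Du has_derivative (\<lambda>v. Hu y *v v)) (at y)"
    and Hu_cont: "continuous_on (cube r) Hu"
  defines "m \<equiv> infnorm_off i x"
  shows "integral {-r..r} (\<lambda>s. if m \<le> \<bar>s\<bar> then u (coord_upd x i s) else 0)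
       = integral {-r..r} (\<lambda>s. (r - infnorm (coord_upd x i s))^2/2 * Hu (coord_upd x i s) $ i $ i)
         + (r - m) * (u (coord_upd x i m) + u (coord_upd x i (-m)))"
proof -
  let ?w = "\<lambda>s. (r - infnorm (coord_upd x i s))^2/2 * Hu (coord_upd x i s) $ i $ i"
  let ?d = "\<lambda>s. if m \<le> \<bar>s\<bar> then u (coord_upd x i s) else 0"
  have line_in_cube: "coord_upd x i s \<in> cube r" if "s \<in> {-r..r}" for s
    using that x by (intro coord_upd_in_cube) auto
  have "((\<lambda>s. (r - max \<bar>s\<bar> m)^2/2 * Hu (coord_upd x i s) $ i $ i - ?d s) has_integral
          - (r - m) * (u (coord_upd x i m) + u (coord_upd x i (-m)))) {-r..r}"
    using infnorm_off_nonneg infnorm_off_le[OF x] line_in_cube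
    by (intro has_integral_weighted_second_derivative[where DU="\<lambda>s. Du (coord_upd x i s) $ i"]
        has_real_derivative_coord_line[OF Du] has_real_derivative_coord_line_nth[OF Hu])
      (auto simp: m_def)
  then have diff: "((\<lambda>s. ?w s - ?d s) has_integral
      - (r - m) * (u (coord_upd x i m) + u (coord_upd x i (-m)))) {-r..r}"
    by (simp add: m_def infnorm_coord_upd[OF assms(1)])
  have "continuous_on {-r..r} ?w"
    using line_in_cube by (intro continuous_intros continuous_on_compose2[OF Hu_cont]) auto
  then have "(?w has_integral integral {-r..r} ?w) {-r..r}"
    by (intro integrable_integral integrable_continuous_real)
  from has_integral_diff[OF this diff] show ?thesis
    by (simp add: integral_unique algebra_simps)
qed

lemma integral_weighted_hessian_le_dominant:
  fixes u :: "real^'n \<Rightarrow> real" and Du :: "real^'n \<Rightarrow> real^'n" and Hu :: "real^'n \<Rightarrow> real^'n^'n" and i :: 'n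
  assumes "CARD('n) \<ge> 2" and "0 < r"
    and Du: "\<And>y. y \<in> cube r \<Longrightarrow> (u has_derivative (\<lambda>v. Du y \<bullet> v)) (at y)"
    and Hu: "\<And>y. y \<in> cube r \<Longrightarrow> (Du has_derivative (\<lambda>v. Hu y *v v)) (at y)"
    and Hu_cont: "continuous_on (cube r) Hu"
    and nonneg: "\<And>x. x \<in> diagset r \<Longrightarrow> 0 \<le> u x"
  shows "integral (cube r) (\<lambda>y. (r - infnorm y)^2/2 * Hu y $ i $ i)
       \<le> integral (cube r) (\<lambda>y. if infnorm_off i y \<le> \<bar>y $ i\<bar> then u y else 0)"
proof -
  let ?w = "\<lambda>y. (r - infnorm y)^2/2 * Hu y $ i $ i"
  define P where "P = (\<lambda>x. integral {-r..r} (\<lambda>s. ?w (coord_upd x i s)))"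
  define J where "J = (\<lambda>x. integral {-r..r}
    (\<lambda>s. if infnorm_off i x \<le> \<bar>s\<bar> then u (coord_upd x i s) else 0))"
  have u_cont: "continuous_on (cube r) u"
    using Du by (intro continuous_at_imp_continuous_on ballI has_derivative_continuous) blast
  have w_cont: "continuous_on (cube r) ?w"
    by (intro continuous_intros Hu_cont) auto
  have "P x \<le> J x" if x: "x \<in> cube r" for x
  proof -
    let ?m = "infnorm_off i x"
    have "coord_upd x i ?m \<in> diagset r" "coord_upd x i (- ?m) \<in> diagset r"
      using coord_upd_in_diagset[OF assms(1) x] infnorm_off_nonneg[of i x] by auto
    then have "0 \<le> (r - ?m) * (u (coord_upd x i ?m) + u (coord_upd x i (- ?m)))"
      using nonneg infnorm_off_le[OF x] by simp
    moreover have "J x = P x + (r - ?m) * (u (coord_upd x i ?m) + u (coord_upd x i (- ?m)))"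
      unfolding P_def J_def by (rule integral_line_dominant_eq[OF assms(1) x]) (auto intro: Du Hu Hu_cont)
    ultimately show ?thesis by linarith
  qed
  moreover have "P integrable_on cube r" "integral (cube r) P = 2 * r * integral (cube r) ?w"
    unfolding P_def using line_average_integral[OF w_cont less_imp_le[OF \<open>0 < r\<close>]] by blast+
  moreover have "J integrable_on cube r"
    "integral (cube r) J = 2 * r * integral (cube r) (\<lambda>y. if infnorm_off i y \<le> \<bar>y $ i\<bar> then u y else 0)"
    unfolding J_def using line_average_integral_dominant[OF u_cont less_imp_le[OF \<open>0 < r\<close>]] by blast+
  ultimately have "2 * r * integral (cube r) ?w
      \<le> 2 * r * integral (cube r) (\<lambda>y. if infnorm_off i y \<le> \<bar>y $ i\<bar> then u y else 0)"
    by (metis integral_le)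
  then show ?thesis
    using \<open>0 < r\<close> by simp
qed

lemma harmonic_on_diff:
  assumes "harmonic_on U f" "harmonic_on U g"
  shows "harmonic_on U (\<lambda>x. f x - g x)"
proof -
  obtain Df Hf where Df: "\<And>x. x \<in> U \<Longrightarrow> (f has_derivative (\<lambda>v. Df x \<bullet> v)) (at x)"
    and Hf: "\<And>x. x \<in> U \<Longrightarrow> (Df has_derivative (\<lambda>v. Hf x *v v)) (at x)"
    and "continuous_on U Hf" "\<And>x. x \<in> U \<Longrightarrow> (\<Sum>i\<in>UNIV. Hf x $ i $ i) = 0"
    using assms(1) unfolding harmonic_on_def by blast
  obtain Dg Hg where Dg: "\<And>x. x \<in> U \<Longrightarrow> (g has_derivative (\<lambda>v. Dg x \<bullet> v)) (at x)"
    and Hg: "\<And>x. x \<in> U \<Longrightarrow> (Dg has_derivative (\<lambda>v. Hg x *v v)) (at x)"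
    and "continuous_on U Hg" "\<And>x. x \<in> U \<Longrightarrow> (\<Sum>i\<in>UNIV. Hg x $ i $ i) = 0"
    using assms(2) unfolding harmonic_on_def by blast
  show ?thesis
    unfolding harmonic_on_def
  proof (intro conjI exI[of _ "\<lambda>x. Df x - Dg x"] exI[of _ "\<lambda>x. Hf x - Hg x"] ballI)
    show "open U"
      using assms(1) by (simp add: harmonic_on_def)
    show "continuous_on U (\<lambda>x. Hf x - Hg x)"
      by (intro continuous_on_diff) fact+
    fix x assume "x \<in> U"
    show "((\<lambda>x. f x - g x) has_derivative (\<lambda>v. (Df x - Dg x) \<bullet> v)) (at x)"
      using has_derivative_diff[OF Df Dg, OF \<open>x \<in> U\<close> \<open>x \<in> U\<close>] by (simp add: inner_diff_left)
    show "((\<lambda>x. Df x - Dg x) has_derivative (\<lambda>v. (Hf x - Hg x) *v v)) (at x)"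
      using has_derivative_diff[OF Hf Hg, OF \<open>x \<in> U\<close> \<open>x \<in> U\<close>]
      by (simp add: matrix_vector_mult_diff_rdistrib)
    show "(\<Sum>i\<in>UNIV. (Hf x - Hg x) $ i $ i) = 0"
      using \<open>x \<in> U\<close> \<open>\<And>x. x \<in> U \<Longrightarrow> (\<Sum>i\<in>UNIV. Hf x $ i $ i) = 0\<close>
        \<open>\<And>x. x \<in> U \<Longrightarrow> (\<Sum>i\<in>UNIV. Hg x $ i $ i) = 0\<close>
      by (simp add: sum_subtractf)
  qed
qed

lemma harmonic_on_subset:
  assumes "harmonic_on U f" "open V" "V \<subseteq> U"
  shows "harmonic_on V f"
proof -
  obtain Df Hf where "\<And>x. x \<in> U \<Longrightarrow> (f has_derivative (\<lambda>v. Df x \<bullet> v)) (at x)"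
    "\<And>x. x \<in> U \<Longrightarrow> (Df has_derivative (\<lambda>v. Hf x *v v)) (at x)"
    "continuous_on U Hf" "\<And>x. x \<in> U \<Longrightarrow> (\<Sum>i\<in>UNIV. Hf x $ i $ i) = 0"
    using assms(1) unfolding harmonic_on_def by blast
  with assms(2,3) show ?thesis
    unfolding harmonic_on_def
    by (intro conjI exI[of _ Df] exI[of _ Hf] ballI continuous_on_subset[of U Hf V]) auto
qed

lemma harm_diff:
  assumes "f \<in> harm S" "g \<in> harm S"
  shows "(\<lambda>x. f x - g x) \<in> harm S"
proof -
  obtain U V where "S \<subseteq> U" "harmonic_on U f" "S \<subseteq> V" "harmonic_on V g"
    using assms unfolding harm_def by blast
  moreover have "open U" "open V"
    using \<open>harmonic_on U f\<close> \<open>harmonic_on V g\<close> by (simp_all add: harmonic_on_def)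
  ultimately have "harmonic_on (U \<inter> V) f" "harmonic_on (U \<inter> V) g"
    by (auto intro: harmonic_on_subset)
  then have "harmonic_on (U \<inter> V) (\<lambda>x. f x - g x)"
    by (rule harmonic_on_diff)
  with \<open>S \<subseteq> U\<close> \<open>S \<subseteq> V\<close> show ?thesis
    unfolding harm_def by blast
qed

lemma harm_continuous_on:
  assumes "f \<in> harm S"
  shows "continuous_on S f"
proof -
  obtain U Df where "S \<subseteq> U" "\<And>x. x \<in> U \<Longrightarrow> (f has_derivative (\<lambda>v. Df x \<bullet> v)) (at x)"
    using assms unfolding harm_def harmonic_on_def by blast
  then show ?thesis
    by (intro continuous_at_imp_continuous_on ballI has_derivative_continuous) blast
qed

lemma harm_integral_cube_nonneg:
  fixes u :: "real^'n \<Rightarrow> real"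
  assumes "CARD('n) \<ge> 2" and "0 < r" and "u \<in> harm (cube r)"
    and nonneg: "\<And>x. x \<in> diagset r \<Longrightarrow> 0 \<le> u x"
  shows "0 \<le> integral (cube r) u"
proof -
  obtain U Du Hu where "cube r \<subseteq> U"
    and Du: "\<And>y. y \<in> U \<Longrightarrow> (u has_derivative (\<lambda>v. Du y \<bullet> v)) (at y)"
    and Hu: "\<And>y. y \<in> U \<Longrightarrow> (Du has_derivative (\<lambda>v. Hu y *v v)) (at y)"
    and Hu_cont: "continuous_on U Hu"
    and laplace: "\<And>y. y \<in> U \<Longrightarrow> (\<Sum>i\<in>UNIV. Hu y $ i $ i) = 0"
    using assms(3) unfolding harm_def harmonic_on_def by blast
  have u_cont: "continuous_on (cube r) u"
    using harm_continuous_on[OF assms(3)] .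
  have Hu_cont': "continuous_on (cube r) Hu"
    using continuous_on_subset[OF Hu_cont \<open>cube r \<subseteq> U\<close>] .
  have w_int: "(\<lambda>y. (r - infnorm y)^2/2 * Hu y $ i $ i) integrable_on cube r" for i
    using Hu_cont' by (simp add: cube_cbox integrable_continuous continuous_intros)
  have "(\<Sum>i\<in>UNIV. (r - infnorm y)^2/2 * Hu y $ i $ i) = 0" if "y \<in> cube r" for y
    unfolding sum_distrib_left[symmetric] using laplace that \<open>cube r \<subseteq> U\<close> by auto
  then have "0 = integral (cube r) (\<lambda>y. \<Sum>i\<in>UNIV. (r - infnorm y)^2/2 * Hu y $ i $ i)"
    by (simp add: integral_cong)
  also have "\<dots> = (\<Sum>i\<in>UNIV. integral (cube r) (\<lambda>y. (r - infnorm y)^2/2 * Hu y $ i $ i))"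
    using w_int by (simp add: integral_sum)
  also have "\<dots> \<le> (\<Sum>i\<in>UNIV. integral (cube r) (\<lambda>y. if infnorm_off i y \<le> \<bar>y $ i\<bar> then u y else 0))"
    using \<open>cube r \<subseteq> U\<close>
    by (intro sum_mono integral_weighted_hessian_le_dominant[OF assms(1,2)])
      (auto intro: Du Hu Hu_cont' nonneg)
  also have "\<dots> = integral (cube r) u"
    using line_average_integral_dominant(1)[OF u_cont less_imp_le[OF \<open>0 < r\<close>]]
    by (rule integral_sum_dominant_coord[OF assms(1)])
  finally show ?thesis .
qed

lemma L1norm_cube_diff:
  assumes "continuous_on (cube r) f" "continuous_on (cube r) g" "\<And>x. x \<in> cube r \<Longrightarrow> g x \<le> f x"
  shows "L1norm (cube r) (\<lambda>x. f x - g x) = integral (cube r) f - integral (cube r) g"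
proof -
  have "L1norm (cube r) (\<lambda>x. f x - g x) = integral (cube r) (\<lambda>x. f x - g x)"
    unfolding L1norm_def using assms(3) by (intro integral_cong) simp
  also have "\<dots> = integral (cube r) f - integral (cube r) g"
    using assms(1,2) by (intro integral_diff) (simp_all add: cube_cbox integrable_continuous)
  finally show ?thesis .
qed

theorem corollary2:
  fixes r :: real and f h :: "real^'n \<Rightarrow> real" and Df :: "real^'n \<Rightarrow> real^'n"
  assumes "CARD('n) \<ge> 2" and "r > 0"
    and f_diff: "\<forall>x\<in>cube r. (f has_derivative (\<lambda>v. Df x \<bullet> v)) (at x within cube r)"
    and f_C1: "continuous_on (cube r) Df"
    and h_harm: "h \<in> harm_below (cube r) f"
    and h_eq: "\<forall>x\<in>diagset r. h x = f x"
    and h_grad: "\<forall>x\<in>diagset r. (h has_derivative (\<lambda>v. Df x \<bullet> v)) (at x)"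
  shows "\<forall>ht \<in> harm_below (cube r) f.
           L1norm (cube r) (\<lambda>x. f x - h x) \<le> L1norm (cube r) (\<lambda>x. f x - ht x)"
proof
  fix ht assume "ht \<in> harm_below (cube r) f"
  then have ht: "ht \<in> harm (cube r)" "\<And>x. x \<in> cube r \<Longrightarrow> ht x \<le> f x"
    by (auto simp: harm_below_def)
  have h: "h \<in> harm (cube r)" "\<And>x. x \<in> cube r \<Longrightarrow> h x \<le> f x"
    using h_harm by (auto simp: harm_below_def)
  have f_cont: "continuous_on (cube r) f"
    using f_diff has_derivative_continuous continuous_on_eq_continuous_within by blast
  have "\<And>x. x \<in> diagset r \<Longrightarrow> 0 \<le> h x - ht x"
    using h_eq ht(2) by (auto simp: diagset_def)
  then have "0 \<le> integral (cube r) (\<lambda>x. h x - ht x)"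
    by (intro harm_integral_cube_nonneg[OF assms(1,2)] harm_diff h(1) ht(1))
  also have "\<dots> = integral (cube r) h - integral (cube r) ht"
    using harm_continuous_on[OF h(1)] harm_continuous_on[OF ht(1)]
    by (intro integral_diff) (simp_all add: cube_cbox integrable_continuous)
  finally show "L1norm (cube r) (\<lambda>x. f x - h x) \<le> L1norm (cube r) (\<lambda>x. f x - ht x)"
    using L1norm_cube_diff[OF f_cont harm_continuous_on[OF h(1)] h(2)]
      L1norm_cube_diff[OF f_cont harm_continuous_on[OF ht(1)] ht(2)] by simp
qed

end
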